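(* Let $m\in\mathbb{N}_0$ and $n\in\mathbb{N}$, and fix a word pattern of $m$ letters $S$ and $n$ letters $T$ whose last letter is $T$. Then there are integers $c_1,\dots,c_m$, depending only on the pattern and not on $g$, such that for every $g\in\mathcal{H}(\mathbb{D})$ the corresponding $g$-word $L\in W^T_g(m,n)$ satisfies $$L=S_g^mT_g^n+\sum_{j=1}^mc_jS_g^{m-j}T_g^{n+j}.$$
   Context: $\mathcal{H}(\mathbb{D})$ analytic functions on the unit disc. For $g\in\mathcal{H}(\mathbb{D})$: $T_gf(z)=\int_0^zf(\zeta)g'(\zeta)d\zeta$, $S_gf(z)=\int_0^zf'(\zeta)g(\zeta)d\zeta$, with $S_g^0$ the identity. $W^T_g(m,n)$ is the set of products of $m$ factors $S_g$ and $n$ factors $T_g$ (in any order) whose last (rightmost) factor is $T_g$. *)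

theory Defs
  imports "HOL-Complex_Analysis.Complex_Analysis"
begin

text \<open>Operators on functions analytic in the unit disc. Values outside the
disc are irrelevant; we normalise them to 0.
The integral from 0 to z is taken along the segment [0,z].\<close>

definition Tg :: "(complex \<Rightarrow> complex) \<Rightarrow> (complex \<Rightarrow> complex) \<Rightarrow> (complex \<Rightarrow> complex)" where
  "Tg g f = (\<lambda>z. if z \<in> ball 0 1
      then contour_integral (linepath 0 z) (\<lambda>\<zeta>. f \<zeta> * deriv g \<zeta>) else 0)"

definition Sg :: "(complex \<Rightarrow> complex) \<Rightarrow> (complex \<Rightarrow> complex) \<Rightarrow> (complex \<Rightarrow> complex)" where
  "Sg g f = (\<lambda>z. if z \<in> ball 0 1
      then contour_integral (linepath 0 z) (\<lambda>\<zeta>. deriv f \<zeta> * g \<zeta>) else 0)"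

text \<open>A word in the letters S and T is a list of booleans: True = T, False = S.
The list is read left to right as the product is written, so the last
element is the rightmost factor (applied first).\<close>

fun word_op :: "(complex \<Rightarrow> complex) \<Rightarrow> bool list \<Rightarrow> (complex \<Rightarrow> complex) \<Rightarrow> (complex \<Rightarrow> complex)" where
  "word_op g [] f = f"
| "word_op g (b # w) f = (if b then Tg g else Sg g) (word_op g w f)"

end

theory Submission
  imports Defs
begin

(* For h holomorphic on the disc with h(0) = 0, integration by parts gives
   S_g h + T_g h = g h; differentiating, T_g S_g h = S_g T_g h - T_g^2 h, and by induction
   T_g^q S_g h = S_g T_g^q h - q T_g^(q+1) h.  Reading a word from the right, each new
   letter S can therefore be moved past the block of T's already accumulated, so every
   word becomes an integer combination of the words S_g^(a-j) T_g^(b+j), with coefficients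
   given by a recursion that involves only the letter counts and never g.  A word whose
   last letter is T acts on T_g f, which vanishes at 0, so the relation applies to every f. *)

lemma holomorphic_convex_linepath_primitive:
  assumes f: "f holomorphic_on S" and S: "open S" "convex S" and "a \<in> S" "x \<in> S"
  shows "((\<lambda>x. contour_integral (linepath a x) f) has_field_derivative f x) (at x)"
proof -
  have "((\<lambda>x. contour_integral (linepath a x) f) has_field_derivative f x) (at x within S)"
  proof (rule triangle_contour_integrals_convex_primitive)
    fix b c assume "b \<in> S" "c \<in> S"
    then have "closed_segment a b \<subseteq> S" "closed_segment b c \<subseteq> S" "closed_segment c a \<subseteq> S"
      using \<open>a \<in> S\<close> \<open>convex S\<close> by (simp_all add: closed_segment_subset)
    then have "(f has_contour_integral 0) (linepath a b +++ linepath b c +++ linepath c a)"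
      by (intro Cauchy_theorem_convex_simple[OF f \<open>convex S\<close>])
         (auto simp: valid_path_join path_image_join)
    then show "contour_integral (linepath a b) f + contour_integral (linepath b c) f +
        contour_integral (linepath c a) f = 0"
      by (rule has_chain_integral_chain_integral3)
  qed (use assms holomorphic_on_imp_continuous_on in auto)
  then show ?thesis
    using at_within_open[OF \<open>x \<in> S\<close> \<open>open S\<close>] by simp
qed

lemma has_field_derivative_eq_on_convex:
  fixes F G :: "'a::real_normed_field \<Rightarrow> 'a"
  assumes "convex S"
    and "\<And>x. x \<in> S \<Longrightarrow> (F has_field_derivative D x) (at x)"
    and "\<And>x. x \<in> S \<Longrightarrow> (G has_field_derivative D x) (at x)"
    and "a \<in> S" "F a = G a" "x \<in> S"
  shows "F x = G x"
proof -
  have "\<exists>c. \<forall>x\<in>S. F x - G x = c"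
  proof (rule has_field_derivative_zero_constant[OF \<open>convex S\<close>])
    fix x assume "x \<in> S"
    have "((\<lambda>x. F x - G x) has_field_derivative D x - D x) (at x)"
      using assms(2,3)[OF \<open>x \<in> S\<close>] by (rule DERIV_diff)
    then show "((\<lambda>x. F x - G x) has_field_derivative 0) (at x within S)"
      by (simp add: has_field_derivative_at_within)
  qed
  then have "F x - G x = F a - G a"
    using \<open>a \<in> S\<close> \<open>x \<in> S\<close> by auto
  with \<open>F a = G a\<close> show ?thesis by simp
qed

lemma Tg_has_field_derivative:
  assumes "g holomorphic_on ball 0 1" "h holomorphic_on ball 0 1" "z \<in> ball 0 1"
  shows "(Tg g h has_field_derivative h z * deriv g z) (at z)"
proof -
  have "(\<lambda>\<zeta>. h \<zeta> * deriv g \<zeta>) holomorphic_on ball 0 1"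
    using assms by (auto intro!: holomorphic_intros)
  from holomorphic_convex_linepath_primitive[OF this _ _ _ \<open>z \<in> ball 0 1\<close>] show ?thesis
    by (rule has_field_derivative_transform_within_open[where S = "ball 0 1"])
       (use assms in \<open>auto simp: Tg_def\<close>)
qed

lemma Sg_has_field_derivative:
  assumes "g holomorphic_on ball 0 1" "h holomorphic_on ball 0 1" "z \<in> ball 0 1"
  shows "(Sg g h has_field_derivative deriv h z * g z) (at z)"
proof -
  have "(\<lambda>\<zeta>. deriv h \<zeta> * g \<zeta>) holomorphic_on ball 0 1"
    using assms by (auto intro!: holomorphic_intros)
  from holomorphic_convex_linepath_primitive[OF this _ _ _ \<open>z \<in> ball 0 1\<close>] show ?thesis
    by (rule has_field_derivative_transform_within_open[where S = "ball 0 1"])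
       (use assms in \<open>auto simp: Sg_def\<close>)
qed

lemma holomorphic_on_Tg:
  "g holomorphic_on ball 0 1 \<Longrightarrow> h holomorphic_on ball 0 1 \<Longrightarrow> Tg g h holomorphic_on ball 0 1"
  using Tg_has_field_derivative holomorphic_on_open[OF open_ball] by blast

lemma holomorphic_on_Sg:
  "g holomorphic_on ball 0 1 \<Longrightarrow> h holomorphic_on ball 0 1 \<Longrightarrow> Sg g h holomorphic_on ball 0 1"
  using Sg_has_field_derivative holomorphic_on_open[OF open_ball] by blast

lemma holomorphic_on_funpow_Tg:
  "g holomorphic_on ball 0 1 \<Longrightarrow> h holomorphic_on ball 0 1 \<Longrightarrow> (Tg g ^^ q) h holomorphic_on ball 0 1"
  by (induction q) (simp_all add: holomorphic_on_Tg)

lemma holomorphic_on_funpow_Sg: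
  "g holomorphic_on ball 0 1 \<Longrightarrow> h holomorphic_on ball 0 1 \<Longrightarrow> (Sg g ^^ p) h holomorphic_on ball 0 1"
  by (induction p) (simp_all add: holomorphic_on_Sg)

lemma Tg_0 [simp]: "Tg g h 0 = 0"
  by (simp add: Tg_def)

lemma Sg_0 [simp]: "Sg g h 0 = 0"
  by (simp add: Sg_def)

lemma funpow_Tg_0: "h 0 = 0 \<Longrightarrow> (Tg g ^^ q) h 0 = 0"
  by (cases q) simp_all

lemma Tg_outside_disc: "z \<notin> ball 0 1 \<Longrightarrow> Tg g h z = 0"
  by (simp add: Tg_def)

lemma Sg_outside_disc: "z \<notin> ball 0 1 \<Longrightarrow> Sg g h z = 0"
  by (simp add: Sg_def)

lemma eq_by_derivative_on_disc:
  assumes "\<And>z. z \<in> ball 0 1 \<Longrightarrow> (F has_field_derivative D z) (at z)"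
    and "\<And>z. z \<in> ball 0 1 \<Longrightarrow> (G has_field_derivative D z) (at z)"
    and "F 0 = G 0" and "\<And>z. z \<notin> ball (0::complex) 1 \<Longrightarrow> F z = G z"
  shows "F = G"
proof
  fix z
  show "F z = G z"
  proof (cases "z \<in> ball 0 1")
    case True
    show ?thesis
      by (rule has_field_derivative_eq_on_convex[OF convex_ball assms(1,2) _ \<open>F 0 = G 0\<close> True])
         auto
  qed (use assms(4) in simp)
qed

lemma Tg_linear:
  assumes g: "g holomorphic_on ball 0 1"
    and X: "X holomorphic_on ball 0 1" and Y: "Y holomorphic_on ball 0 1"
  shows "Tg g (\<lambda>z. a * X z + b * Y z) = (\<lambda>z. a * Tg g X z + b * Tg g Y z)"
proof (rule eq_by_derivative_on_disc)
  fix z :: complex assume z: "z \<in> ball 0 1"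
  have "(\<lambda>z. a * X z + b * Y z) holomorphic_on ball 0 1"
    using X Y by (auto intro!: holomorphic_intros)
  from Tg_has_field_derivative[OF g this z]
  show "(Tg g (\<lambda>z. a * X z + b * Y z) has_field_derivative (a * X z + b * Y z) * deriv g z) (at z)" .
  show "((\<lambda>z. a * Tg g X z + b * Tg g Y z) has_field_derivative (a * X z + b * Y z) * deriv g z) (at z)"
    using Tg_has_field_derivative[OF g X z] Tg_has_field_derivative[OF g Y z]
    by (auto intro!: derivative_eq_intros simp: algebra_simps)
qed (simp_all add: Tg_outside_disc)

lemma Sg_linear:
  assumes g: "g holomorphic_on ball 0 1"
    and X: "X holomorphic_on ball 0 1" and Y: "Y holomorphic_on ball 0 1"
  shows "Sg g (\<lambda>z. a * X z + b * Y z) = (\<lambda>z. a * Sg g X z + b * Sg g Y z)"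
proof (rule eq_by_derivative_on_disc)
  fix z :: complex assume z: "z \<in> ball 0 1"
  have XY: "(\<lambda>z. a * X z + b * Y z) holomorphic_on ball 0 1"
    using X Y by (auto intro!: holomorphic_intros)
  have "deriv (\<lambda>z. a * X z + b * Y z) z = a * deriv X z + b * deriv Y z"
    using holomorphic_derivI[OF X open_ball z] holomorphic_derivI[OF Y open_ball z]
    by (intro DERIV_imp_deriv) (auto intro!: derivative_eq_intros)
  with Sg_has_field_derivative[OF g XY z]
  show "(Sg g (\<lambda>z. a * X z + b * Y z) has_field_derivative (a * deriv X z + b * deriv Y z) * g z) (at z)"
    by simp
  show "((\<lambda>z. a * Sg g X z + b * Sg g Y z) has_field_derivative (a * deriv X z + b * deriv Y z) * g z) (at z)"
    using Sg_has_field_derivative[OF g X z] Sg_has_field_derivative[OF g Y z]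
    by (auto intro!: derivative_eq_intros simp: algebra_simps)
qed (simp_all add: Sg_outside_disc)

lemma funpow_Sg_linear:
  assumes g: "g holomorphic_on ball 0 1"
    and X: "X holomorphic_on ball 0 1" and Y: "Y holomorphic_on ball 0 1"
  shows "(Sg g ^^ p) (\<lambda>z. a * X z + b * Y z) = (\<lambda>z. a * (Sg g ^^ p) X z + b * (Sg g ^^ p) Y z)"
proof (induction p)
  case (Suc p)
  then show ?case
    using Sg_linear[OF g holomorphic_on_funpow_Sg[OF g X] holomorphic_on_funpow_Sg[OF g Y]]
    by simp
qed simp

lemma Sg_plus_Tg:
  assumes g: "g holomorphic_on ball 0 1" and h: "h holomorphic_on ball 0 1" "h 0 = 0"
    and z: "z \<in> ball 0 1"
  shows "Sg g h z + Tg g h z = g z * h z"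
proof (rule has_field_derivative_eq_on_convex[OF convex_ball _ _ centre_in_ball[THEN iffD2] _ z])
  fix z :: complex assume z: "z \<in> ball 0 1"
  show "((\<lambda>z. Sg g h z + Tg g h z) has_field_derivative deriv h z * g z + h z * deriv g z) (at z)"
    using Sg_has_field_derivative[OF g h(1) z] Tg_has_field_derivative[OF g h(1) z]
    by (rule DERIV_add)
  show "((\<lambda>z. g z * h z) has_field_derivative deriv h z * g z + h z * deriv g z) (at z)"
    using holomorphic_derivI[OF g open_ball z] holomorphic_derivI[OF h(1) open_ball z]
    by (auto intro!: derivative_eq_intros simp: algebra_simps)
qed (simp_all add: h(2))

lemma Tg_Sg:
  assumes g: "g holomorphic_on ball 0 1" and h: "h holomorphic_on ball 0 1" "h 0 = 0"
  shows "Tg g (Sg g h) = (\<lambda>z. Sg g (Tg g h) z - Tg g (Tg g h) z)"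
proof (rule eq_by_derivative_on_disc)
  fix z :: complex assume z: "z \<in> ball 0 1"
  show "(Tg g (Sg g h) has_field_derivative Sg g h z * deriv g z) (at z)"
    using Tg_has_field_derivative[OF g holomorphic_on_Sg[OF g h(1)] z] .
  have "((\<lambda>z. Sg g (Tg g h) z - Tg g (Tg g h) z)
      has_field_derivative deriv (Tg g h) z * g z - Tg g h z * deriv g z) (at z)"
    using Sg_has_field_derivative[OF g holomorphic_on_Tg[OF g h(1)] z]
      Tg_has_field_derivative[OF g holomorphic_on_Tg[OF g h(1)] z]
    by (rule DERIV_diff)
  moreover have "deriv (Tg g h) z * g z - Tg g h z * deriv g z = Sg g h z * deriv g z"
  proof -
    have "deriv (Tg g h) z = h z * deriv g z"
      by (rule DERIV_imp_deriv[OF Tg_has_field_derivative[OF g h(1) z]])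
    with Sg_plus_Tg[OF g h z] show ?thesis
      by algebra
  qed
  ultimately show "((\<lambda>z. Sg g (Tg g h) z - Tg g (Tg g h) z)
      has_field_derivative Sg g h z * deriv g z) (at z)"
    by simp
qed (simp_all add: Tg_outside_disc Sg_outside_disc)

lemma funpow_Tg_Sg:
  assumes g: "g holomorphic_on ball 0 1" and h: "h holomorphic_on ball 0 1" "h 0 = 0"
  shows "(Tg g ^^ q) (Sg g h) = (\<lambda>z. Sg g ((Tg g ^^ q) h) z - of_nat q * (Tg g ^^ Suc q) h z)"
proof (induction q)
  case (Suc q)
  let ?Tq = "(Tg g ^^ q) h"
  have Tq: "?Tq holomorphic_on ball 0 1" "?Tq 0 = 0"
    using holomorphic_on_funpow_Tg[OF g h(1)] funpow_Tg_0[of h, OF h(2)] by auto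
  have "(Tg g ^^ Suc q) (Sg g h) = Tg g (\<lambda>z. 1 * Sg g ?Tq z + (- of_nat q) * Tg g ?Tq z)"
    using Suc.IH by simp
  also have "\<dots> = (\<lambda>z. 1 * Tg g (Sg g ?Tq) z + (- of_nat q) * Tg g (Tg g ?Tq) z)"
    by (rule Tg_linear[OF g holomorphic_on_Sg[OF g Tq(1)] holomorphic_on_Tg[OF g Tq(1)]])
  also have "\<dots> = (\<lambda>z. Sg g (Tg g ?Tq) z - of_nat (Suc q) * Tg g (Tg g ?Tq) z)"
    by (simp add: Tg_Sg[OF g Tq] algebra_simps)
  finally show ?case by simp
qed simp

abbreviation S_count :: "bool list \<Rightarrow> nat" where
  "S_count w \<equiv> length (filter (\<lambda>b. \<not> b) w)"

abbreviation T_count :: "bool list \<Rightarrow> nat" where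
  "T_count w \<equiv> length (filter (\<lambda>b. b) w)"

(* Appending S to a word rewrites T^(b+i) S as S T^(b+i) - (b+i) T^(b+i+1) (funpow_Tg_Sg). *)
function nf_coeff :: "bool list \<Rightarrow> nat \<Rightarrow> int" where
  "nf_coeff [] = (\<lambda>j. of_bool (j = 0))"
| "nf_coeff (w @ [True]) = nf_coeff w"
| "nf_coeff (w @ [False]) = (\<lambda>j. nf_coeff w j
      - (case j of 0 \<Rightarrow> 0 | Suc i \<Rightarrow> int (T_count w + i) * nf_coeff w i))"
  by (metis rev_exhaust) auto
termination
  by (relation "Wellfounded.measure length") auto

lemma nf_coeff_0 [simp]: "nf_coeff w 0 = 1"
  by (induction w rule: nf_coeff.induct) simp_all

lemma nf_coeff_eq_0: "S_count w < j \<Longrightarrow> nf_coeff w j = 0"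
  by (induction w arbitrary: j rule: nf_coeff.induct) (auto split: nat.split)

lemma word_op_snoc: "word_op g (w @ [b]) h = word_op g w (word_op g [b] h)"
  by (induction w) simp_all

lemma funpow_Sg_funpow_Tg_Sg:
  assumes g: "g holomorphic_on ball 0 1" and h: "h holomorphic_on ball 0 1" "h 0 = 0"
  shows "(Sg g ^^ p) ((Tg g ^^ q) (Sg g h)) =
    (\<lambda>z. (Sg g ^^ Suc p) ((Tg g ^^ q) h) z - of_nat q * (Sg g ^^ p) ((Tg g ^^ Suc q) h) z)"
proof -
  have Tq: "(Tg g ^^ q) h holomorphic_on ball 0 1" for q
    using holomorphic_on_funpow_Tg[OF g h(1)] .
  have "(Tg g ^^ q) (Sg g h) = (\<lambda>z. 1 * Sg g ((Tg g ^^ q) h) z + (- of_nat q) * (Tg g ^^ Suc q) h z)"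
    using funpow_Tg_Sg[OF g h] by simp
  then show ?thesis
    using funpow_Sg_linear[OF g holomorphic_on_Sg[OF g Tq[of q]] Tq[of "Suc q"],
        where p = p and a = 1 and b = "- of_nat q"]
    by (simp add: funpow_Suc_right[where f = "Sg g"] del: funpow.simps)
qed

lemma sum_nf_coeff_step:
  fixes N :: "nat \<Rightarrow> nat \<Rightarrow> 'a::comm_ring_1" and c :: "nat \<Rightarrow> int"
  assumes "c (Suc a) = 0"
  shows "(\<Sum>j\<le>a. of_int (c j) * (N (Suc a - j) (b + j) - of_nat (b + j) * N (a - j) (b + Suc j)))
    = (\<Sum>j\<le>Suc a. of_int (c j - (case j of 0 \<Rightarrow> 0 | Suc i \<Rightarrow> int (b + i) * c i)) * N (Suc a - j) (b + j))"
proof -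
  have "(\<Sum>j\<le>Suc a. of_int (c j) * N (Suc a - j) (b + j)) = (\<Sum>j\<le>a. of_int (c j) * N (Suc a - j) (b + j))"
    using assms by simp
  moreover have "(\<Sum>j\<le>Suc a. of_int (case j of 0 \<Rightarrow> 0 | Suc i \<Rightarrow> int (b + i) * c i) * N (Suc a - j) (b + j))
      = (\<Sum>j\<le>a. of_nat (b + j) * of_int (c j) * N (a - j) (b + Suc j))"
    by (simp add: sum.atMost_Suc_shift del: sum.atMost_Suc)
  ultimately show ?thesis
    by (simp add: algebra_simps sum_subtractf)
qed

lemma word_op_normal_form:
  assumes g: "g holomorphic_on ball 0 1" and "h holomorphic_on ball 0 1" "h 0 = 0"
  shows "word_op g w h = (\<lambda>z. \<Sum>j\<le>S_count w. of_int (nf_coeff w j) *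
           (Sg g ^^ (S_count w - j)) ((Tg g ^^ (T_count w + j)) h) z)"
  using assms(2,3)
proof (induction w arbitrary: h rule: rev_induct)
  case Nil
  then show ?case by simp
next
  case (snoc x w)
  show ?case
  proof (cases x)
    case True
    with snoc show ?thesis
      by (simp add: word_op_snoc holomorphic_on_Tg[OF g] funpow_swap1[symmetric])
  next
    case False
    let ?N = "\<lambda>z p q. (Sg g ^^ p) ((Tg g ^^ q) h) z"
    have "word_op g (w @ [False]) h = word_op g w (Sg g h)"
      by (simp add: word_op_snoc)
    also have "\<dots> = (\<lambda>z. \<Sum>j\<le>S_count w. of_int (nf_coeff w j) *
        (?N z (Suc (S_count w) - j) (T_count w + j)
          - of_nat (T_count w + j) * ?N z (S_count w - j) (T_count w + Suc j)))"
      using snoc.IH[OF holomorphic_on_Sg[OF g snoc.prems(1)] Sg_0]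
      by (simp add: funpow_Sg_funpow_Tg_Sg[OF g snoc.prems] Suc_diff_le del: funpow.simps)
    also have "\<dots> = (\<lambda>z. \<Sum>j\<le>S_count (w @ [False]). of_int (nf_coeff (w @ [False]) j) *
        ?N z (S_count (w @ [False]) - j) (T_count (w @ [False]) + j))"
    proof
      fix z
      show "(\<Sum>j\<le>S_count w. of_int (nf_coeff w j) *
          (?N z (Suc (S_count w) - j) (T_count w + j)
            - of_nat (T_count w + j) * ?N z (S_count w - j) (T_count w + Suc j)))
        = (\<Sum>j\<le>S_count (w @ [False]). of_int (nf_coeff (w @ [False]) j) *
          ?N z (S_count (w @ [False]) - j) (T_count (w @ [False]) + j))"
        using sum_nf_coeff_step[where N = "?N z" and c = "nf_coeff w", OF nf_coeff_eq_0[OF lessI]] by simp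
    qed
    finally show ?thesis
      using False by simp
  qed
qed

lemma word_op_normal_form_last_T:
  assumes g: "g holomorphic_on ball 0 1" and f: "f holomorphic_on ball 0 1"
    and "w \<noteq> []" "last w"
  shows "word_op g w f = (\<lambda>z. \<Sum>j\<le>S_count w. of_int (nf_coeff w j) *
           (Sg g ^^ (S_count w - j)) ((Tg g ^^ (T_count w + j)) f) z)"
proof -
  obtain v where w: "w = v @ [True]"
    using assms(3,4) by (metis append_butlast_last_id)
  have "word_op g w f = word_op g v (Tg g f)"
    by (simp add: w word_op_snoc)
  also have "\<dots> = (\<lambda>z. \<Sum>j\<le>S_count v. of_int (nf_coeff v j) *
           (Sg g ^^ (S_count v - j)) ((Tg g ^^ (T_count v + j)) (Tg g f)) z)"
    by (rule word_op_normal_form[OF g holomorphic_on_Tg[OF g f] Tg_0])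
  finally show ?thesis
    by (simp add: w funpow_swap1[symmetric])
qed

theorem proposition3p7:
  fixes m n :: nat and w :: "bool list"
  assumes "n \<ge> 1"
    and "length (filter (\<lambda>b. \<not> b) w) = m"
    and "length (filter (\<lambda>b. b) w) = n"
    and "w \<noteq> []" and "last w = True"
  shows "\<exists>c :: nat \<Rightarrow> int. \<forall>g. g holomorphic_on ball 0 1 \<longrightarrow>
           (\<forall>f. f holomorphic_on ball 0 1 \<longrightarrow> (\<forall>z \<in> ball 0 1.
              word_op g w f z =
                ((Sg g ^^ m) ((Tg g ^^ n) f)) z
                + (\<Sum>j = 1..m. of_int (c j) * ((Sg g ^^ (m - j)) ((Tg g ^^ (n + j)) f)) z)))"
proof (intro exI[of _ "nf_coeff w"] allI impI ballI)
  fix g f :: "complex \<Rightarrow> complex" and z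
  assume g: "g holomorphic_on ball 0 1" and f: "f holomorphic_on ball 0 1"
  have "word_op g w f z = (\<Sum>j\<le>m. of_int (nf_coeff w j) * (Sg g ^^ (m - j)) ((Tg g ^^ (n + j)) f) z)"
    using word_op_normal_form_last_T[OF g f assms(4)] assms(2,3,5) by simp
  also have "\<dots> = ((Sg g ^^ m) ((Tg g ^^ n) f)) z
      + (\<Sum>j = 1..m. of_int (nf_coeff w j) * ((Sg g ^^ (m - j)) ((Tg g ^^ (n + j)) f)) z)"
    by (simp add: atMost_atLeast0 sum.atLeast_Suc_atMost)
  finally show "word_op g w f z = ((Sg g ^^ m) ((Tg g ^^ n) f)) z
      + (\<Sum>j = 1..m. of_int (nf_coeff w j) * ((Sg g ^^ (m - j)) ((Tg g ^^ (n + j)) f)) z)" .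
qed

end
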